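(* There is a deterministic distributed dynamic data structure for $2$-hop neighborhood listing which handles edge insertions and deletions in $O\left(\frac{n}{\log n}\right)$ amortized rounds.
   Context: Highly dynamic network model: a synchronous network on a fixed set $V$ of $n$ nodes with unique identifiers starts as the empty graph; at the beginning of round $i$ the graph is $G_i=(V,E_i)$, obtained from the previous graph by an adversary inserting and/or deleting an arbitrary (unbounded) set of edges. At the start of each round every node is notified only of the insertions/deletions of edges incident to it; then each node may send a message of $O(\log n)$ bits to each of its current neighbors. A distributed dynamic data structure consists of a local part $DS_v$ at each node $v$; at the end of every round, $DS_v$ may be queried and must answer immediately, without any further communication, either correctly or with $\texttt{inconsistent}$. The amortized round complexity is at most $c$ if for every round $i$, the number of rounds up to round $i$ in which at least one node $v$ has $DS_v$ in an inconsistent state, divided by the total number of topology changes that occurred up to round $i$, is at most $c$. Let $E^{v,2}_i$ be the set of edges of $G_i$ incident to $v$ or to a neighbor of $v$. $2$-hop neighborhood listing: $DS_v$ must respond at the end of round $i$ to a query $\{u,w\}$ with $\texttt{true}$ if $\{u,w\}\in E^{v,2}_i$, $\texttt{false}$ otherwise, or $\texttt{inconsistent}$. *)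

theory Defs
  imports Complex_Main
begin

text \<open>A deterministic distributed dynamic data structure for a fixed n,
  with local states of type 's.  All functions take the node identifier v
  as first argument (a node knows its own identifier and n).
  \<^item> init v: initial local state of v (the graph starts empty);
  \<^item> send v s ins del u: the message (a natural number, or None for no
    message) that v, in local state s (state at the end of the previous
    round), after being notified that the incident edges to the nodes in
    ins were inserted and those to nodes in del were deleted, sends to its
    current neighbour u;
  \<^item> step v s ins del rcv: the new local state of v, where rcv u is the
    message received from u (None if u is not a current neighbour or sent
    nothing);
  \<^item> consistent v s / answer v s u w: the local query interface of DS_v:
    if not consistent, every query is answered inconsistent; otherwise the
    query {u,w} is answered answer v s u w.\<close>
record 's dds =
  init :: "nat \<Rightarrow> 's"
  send :: "nat \<Rightarrow> 's \<Rightarrow> nat set \<Rightarrow> nat set \<Rightarrow> nat \<Rightarrow> nat option"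
  step :: "nat \<Rightarrow> 's \<Rightarrow> nat set \<Rightarrow> nat set \<Rightarrow> (nat \<Rightarrow> nat option) \<Rightarrow> 's"
  consistent :: "nat \<Rightarrow> 's \<Rightarrow> bool"
  answer :: "nat \<Rightarrow> 's \<Rightarrow> nat \<Rightarrow> nat \<Rightarrow> bool"

definition valid_seq :: "nat \<Rightarrow> (nat \<Rightarrow> nat set set) \<Rightarrow> bool" where
  "valid_seq n E \<longleftrightarrow> E 0 = {} \<and>
     (\<forall>i. E i \<subseteq> {{u, w} | u w. u < n \<and> w < n \<and> u \<noteq> w})"

definition ins_nbrs :: "(nat \<Rightarrow> nat set set) \<Rightarrow> nat \<Rightarrow> nat \<Rightarrow> nat set" where
  "ins_nbrs E i v = {u. {v, u} \<in> E i \<and> {v, u} \<notin> E (i - 1)}"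

definition del_nbrs :: "(nat \<Rightarrow> nat set set) \<Rightarrow> nat \<Rightarrow> nat \<Rightarrow> nat set" where
  "del_nbrs E i v = {u. {v, u} \<notin> E i \<and> {v, u} \<in> E (i - 1)}"

fun run :: "'s dds \<Rightarrow> (nat \<Rightarrow> nat set set) \<Rightarrow> nat \<Rightarrow> nat \<Rightarrow> 's" where
  "run A E 0 v = init A v"
| "run A E (Suc i) v =
     step A v (run A E i v) (ins_nbrs E (Suc i) v) (del_nbrs E (Suc i) v)
       (\<lambda>u. if {u, v} \<in> E (Suc i)
             then send A u (run A E i u) (ins_nbrs E (Suc i) u) (del_nbrs E (Suc i) u) v
             else None)"

definition two_hop :: "(nat \<Rightarrow> nat set set) \<Rightarrow> nat \<Rightarrow> nat \<Rightarrow> nat set set" where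
  "two_hop E i v = {e \<in> E i. \<exists>x \<in> e. x = v \<or> {v, x} \<in> E i}"

text \<open>Messages have O(log n) bits: values below (n+1)^K, i.e. at most
  about K log(n+1) bits.\<close>
definition msg_bounded :: "nat \<Rightarrow> nat \<Rightarrow> 's dds \<Rightarrow> bool" where
  "msg_bounded n K A \<longleftrightarrow>
     (\<forall>v s ins del u m. send A v s ins del u = Some m \<longrightarrow> m < (n + 1) ^ K)"

definition correct_2hop :: "nat \<Rightarrow> 's dds \<Rightarrow> bool" where
  "correct_2hop n A \<longleftrightarrow>
     (\<forall>E. valid_seq n E \<longrightarrow> (\<forall>i v. v < n \<longrightarrow> consistent A v (run A E i v) \<longrightarrow>
        (\<forall>u w. answer A v (run A E i v) u w \<longleftrightarrow> {u, w} \<in> two_hop E i v)))"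

definition changes :: "(nat \<Rightarrow> nat set set) \<Rightarrow> nat \<Rightarrow> nat" where
  "changes E j = card ((E (j - 1) - E j) \<union> (E j - E (j - 1)))"

definition total_changes :: "(nat \<Rightarrow> nat set set) \<Rightarrow> nat \<Rightarrow> nat" where
  "total_changes E i = (\<Sum>j\<in>{1..i}. changes E j)"

definition inconsistent_rounds :: "nat \<Rightarrow> 's dds \<Rightarrow> (nat \<Rightarrow> nat set set) \<Rightarrow> nat \<Rightarrow> nat" where
  "inconsistent_rounds n A E i =
     card {j \<in> {1..i}. \<exists>v < n. \<not> consistent A v (run A E j v)}"

text \<open>Amortized round complexity at most c (ratio written multiplicatively,
  so that with zero changes no inconsistent round is allowed).\<close>
definition amortized_le :: "nat \<Rightarrow> 's dds \<Rightarrow> real \<Rightarrow> bool" where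
  "amortized_le n A c \<longleftrightarrow>
     (\<forall>E. valid_seq n E \<longrightarrow>
        (\<forall>i. real (inconsistent_rounds n A E i) \<le> c * real (total_changes E i)))"

end

theory Submission
  imports Defs "HOL-Library.Discrete_Functions" "HOL-Library.Nat_Bijection" "HOL-Library.Countable"
begin

text \<open>Let b = floor(log2 n).  A node whose incident edges change restarts a phase counter and
  during the next n div b + 1 rounds sends its new neighbourhood, as a bit vector cut into chunks of
  b bits, to all neighbours, one chunk per message; a message is a chunk tagged with its index and
  so is smaller than (n + 1)^2.  A node that holds complete copies of the neighbourhoods of all its
  neighbours knows its 2-hop neighbourhood, and it declares itself inconsistent otherwise.  Hence
  every inconsistent round lies in a window of n div b + 1 = O(n / log n) rounds after a round in
  which the graph changed, and each such round contributes at least one topology change.\<close>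

lemma finite_valid_seq:
  assumes "valid_seq n E"
  shows "finite (E j)"
proof (rule finite_subset)
  show "E j \<subseteq> Pow {..<n}"
  proof
    fix e
    assume "e \<in> E j"
    then obtain u w where "e = {u, w}" "u < n" "w < n"
      using assms unfolding valid_seq_def by blast
    then show "e \<in> Pow {..<n}"
      by simp
  qed
qed simp

definition nbhd :: "(nat \<Rightarrow> nat set set) \<Rightarrow> nat \<Rightarrow> nat \<Rightarrow> nat set" where
  "nbhd E j v = {u. {v, u} \<in> E j}"

lemma valid_seq_edge:
  assumes "valid_seq n E" "{u, v} \<in> E j"
  shows "u < n" "v < n"
proof -
  obtain a c where "{u, v} = {a, c}" "a < n" "c < n"
    using assms unfolding valid_seq_def by blast
  then show "u < n" "v < n"
    by (auto simp: doubleton_eq_iff)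
qed

lemma nbhd_subset: "valid_seq n E \<Longrightarrow> nbhd E j v \<subseteq> {..<n}"
  by (auto simp: nbhd_def dest: valid_seq_edge(2))

lemma two_hop_iff:
  "{x, y} \<in> two_hop E j v \<longleftrightarrow>
     (x = v \<and> y \<in> nbhd E j v) \<or> (y = v \<and> x \<in> nbhd E j v)
     \<or> (x \<in> nbhd E j v \<and> y \<in> nbhd E j x) \<or> (y \<in> nbhd E j v \<and> x \<in> nbhd E j y)"
  by (auto simp: two_hop_def nbhd_def insert_commute)

definition change_rounds :: "(nat \<Rightarrow> nat set set) \<Rightarrow> nat \<Rightarrow> nat set" where
  "change_rounds E i = {s \<in> {1..i}. E s \<noteq> E (s - 1)}"

lemma card_change_rounds_le:
  assumes "valid_seq n E"
  shows "card (change_rounds E i) \<le> total_changes E i"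
proof -
  have "card (change_rounds E i) = (\<Sum>s\<in>change_rounds E i. 1)"
    by simp
  also have "\<dots> \<le> (\<Sum>s\<in>change_rounds E i. changes E s)"
  proof (rule sum_mono)
    fix s
    assume "s \<in> change_rounds E i"
    then have "(E (s - 1) - E s) \<union> (E s - E (s - 1)) \<noteq> {}"
      by (auto simp: change_rounds_def)
    then show "1 \<le> changes E s"
      using finite_valid_seq[OF assms] by (simp add: changes_def Suc_le_eq card_gt_0_iff)
  qed
  also have "\<dots> \<le> total_changes E i"
    unfolding total_changes_def by (rule sum_mono2) (auto simp: change_rounds_def)
  finally show ?thesis .
qed

definition nat_dds :: "'s::countable dds \<Rightarrow> nat dds" where
  "nat_dds A =
     \<lparr> init = (\<lambda>v. to_nat (init A v)),
       send = (\<lambda>v s. send A v (from_nat s)),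
       step = (\<lambda>v s ins del rcv. to_nat (step A v (from_nat s) ins del rcv)),
       consistent = (\<lambda>v s. consistent A v (from_nat s)),
       answer = (\<lambda>v s. answer A v (from_nat s)) \<rparr>"

lemma nat_dds_simps [simp]:
  "init (nat_dds A) v = to_nat (init A v)"
  "send (nat_dds A) v s ins del u = send A v (from_nat s) ins del u"
  "step (nat_dds A) v s ins del rcv = to_nat (step A v (from_nat s) ins del rcv)"
  "consistent (nat_dds A) v s = consistent A v (from_nat s)"
  "answer (nat_dds A) v s x y = answer A v (from_nat s) x y"
  by (simp_all add: nat_dds_def)

lemma run_nat_dds: "run (nat_dds A) E i v = to_nat (run A E i v)"
  by (induction i arbitrary: v) (simp_all cong: if_cong)

lemma msg_bounded_nat_dds: "msg_bounded n K A \<Longrightarrow> msg_bounded n K (nat_dds A)"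
  by (simp add: msg_bounded_def nat_dds_def)

lemma correct_2hop_nat_dds: "correct_2hop n (nat_dds A) \<longleftrightarrow> correct_2hop n A"
  by (simp add: correct_2hop_def run_nat_dds)

lemma amortized_le_nat_dds: "amortized_le n (nat_dds A) c \<longleftrightarrow> amortized_le n A c"
  by (simp add: amortized_le_def inconsistent_rounds_def run_nat_dds)

lemma amortized_le_mono:
  assumes "amortized_le n A c" "c \<le> c'"
  shows "amortized_le n A c'"
  unfolding amortized_le_def
proof (intro allI impI)
  fix E i
  assume "valid_seq n E"
  then have "real (inconsistent_rounds n A E i) \<le> c * real (total_changes E i)"
    using assms(1) by (simp add: amortized_le_def)
  also have "\<dots> \<le> c' * real (total_changes E i)"
    using assms(2) by (intro mult_right_mono) simp_all
  finally show "real (inconsistent_rounds n A E i) \<le> c' * real (total_changes E i)" .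
qed

lemma amortized_le_if_recent_change:
  assumes "\<And>E j v. valid_seq n E \<Longrightarrow> 1 \<le> j \<Longrightarrow> v < n \<Longrightarrow> \<not> consistent A v (run A E j v) \<Longrightarrow>
             \<exists>s\<in>{1..j}. E s \<noteq> E (s - 1) \<and> j < s + T"
  shows "amortized_le n A (real T)"
  unfolding amortized_le_def
proof (intro allI impI)
  fix E i
  assume valid: "valid_seq n E"
  let ?bad = "{j \<in> {1..i}. \<exists>v < n. \<not> consistent A v (run A E j v)}"
  let ?window = "\<Union>s\<in>change_rounds E i. {s..<s + T}"
  have fin: "finite (change_rounds E i)"
    by (simp add: change_rounds_def)
  have "?bad \<subseteq> ?window"
  proof
    fix j
    assume "j \<in> ?bad"
    then obtain v where j: "1 \<le> j" "j \<le> i" and "v < n" "\<not> consistent A v (run A E j v)"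
      by auto
    then obtain s where s: "s \<in> {1..j}" "E s \<noteq> E (s - 1)" "j < s + T"
      using assms[OF valid] by blast
    then have "s \<in> change_rounds E i"
      using j by (simp add: change_rounds_def)
    with s show "j \<in> ?window"
      by (intro UN_I[of s]) simp_all
  qed
  then have "card ?bad \<le> card ?window"
    using fin by (intro card_mono) simp_all
  also have "\<dots> \<le> (\<Sum>s\<in>change_rounds E i. card {s..<s + T})"
    using fin by (rule card_UN_le)
  also have "\<dots> = T * card (change_rounds E i)"
    by (simp add: mult.commute)
  also have "\<dots> \<le> T * total_changes E i"
    using card_change_rounds_le[OF valid] by (rule mult_le_mono2)
  finally have "real (card ?bad) \<le> real (T * total_changes E i)"
    by (simp only: of_nat_le_iff)
  then show "real (inconsistent_rounds n A E i) \<le> real T * real (total_changes E i)"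
    by (simp add: inconsistent_rounds_def)
qed

definition chunk_bits :: "nat \<Rightarrow> nat" where
  "chunk_bits n = floor_log n"

definition num_chunks :: "nat \<Rightarrow> nat" where
  "num_chunks n = n div chunk_bits n + 1"

lemma chunk_bits_pos: "2 \<le> n \<Longrightarrow> 0 < chunk_bits n"
  unfolding chunk_bits_def by (subst floor_log_rec) simp_all

lemma less_num_chunks_mult_chunk_bits:
  assumes "2 \<le> n"
  shows "n < num_chunks n * chunk_bits n"
proof -
  define b where "b = chunk_bits n"
  have "n mod b < b"
    using chunk_bits_pos[OF assms] by (simp add: b_def)
  moreover have "n div b * b + n mod b = n"
    by (rule div_mult_mod_eq)
  moreover have "num_chunks n * b = n div b * b + b"
    by (simp add: num_chunks_def b_def algebra_simps)
  ultimately show ?thesis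
    unfolding b_def by linarith
qed

lemma num_chunks_le:
  assumes "2 \<le> n"
  shows "real (num_chunks n) \<le> 3 * real n / log 2 (real n)"
proof -
  define b where "b = chunk_bits n"
  define L where "L = log 2 (real n)"
  have "2 ^ b \<le> n"
    using assms unfolding b_def chunk_bits_def by (intro floor_log_exp2_le) simp
  have "n < 2 ^ Suc b"
    using floor_log_exp2_gt[of n] by (simp add: b_def chunk_bits_def)
  have "1 \<le> L"
    using le_log2_of_power[of 1 n] assms by (simp add: L_def)
  have "L < real b + 1"
    using log2_of_power_less[OF \<open>n < 2 ^ Suc b\<close>] assms by (simp add: L_def)
  have "1 \<le> real b"
    using chunk_bits_pos[OF assms] by (simp add: b_def)
  have "Suc b \<le> n"
    using less_exp[of b] \<open>2 ^ b \<le> n\<close> by linarith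
  then have "real b + 1 \<le> real n"
    by (metis of_nat_Suc of_nat_le_iff add.commute)
  have "L \<le> 2 * real b"
    using \<open>L < real b + 1\<close> \<open>1 \<le> real b\<close> by linarith
  have "real n / real b = 2 * real n / (2 * real b)"
    by simp
  also have "\<dots> \<le> 2 * real n / L"
    using \<open>L \<le> 2 * real b\<close> \<open>1 \<le> L\<close> by (intro divide_left_mono) simp_all
  finally have "real n / real b \<le> 2 * real n / L" .
  moreover have "1 \<le> real n / L"
    using \<open>L < real b + 1\<close> \<open>real b + 1 \<le> real n\<close> \<open>1 \<le> L\<close> by simp
  moreover have "real (num_chunks n) \<le> real n / real b + 1"
    using of_nat_div_le_of_nat[of n b] by (simp add: num_chunks_def b_def)
  ultimately have "real (num_chunks n) \<le> 2 * real n / L + real n / L"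
    by linarith
  then show ?thesis
    by (simp add: L_def flip: add_divide_distrib)
qed

lemma set_encode_less_power:
  assumes "A \<subseteq> {..<b}"
  shows "set_encode A < 2 ^ b"
proof -
  have "set_encode A \<le> (\<Sum>i<b. 2 ^ i)"
    unfolding set_encode_def using assms by (intro sum_mono2) auto
  also have "(\<Sum>i<b. 2 ^ i) < (2::nat) ^ b"
    by (induction b) simp_all
  finally show ?thesis .
qed

definition chunk :: "nat \<Rightarrow> nat \<Rightarrow> nat set \<Rightarrow> nat" where
  "chunk b k S = set_encode {i. i < b \<and> k * b + i \<in> S}"

definition unchunk :: "nat \<Rightarrow> nat \<Rightarrow> nat \<Rightarrow> nat set" where
  "unchunk b k c = (+) (k * b) ` set_decode c"

lemma chunk_less: "chunk b k S < 2 ^ b"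
  unfolding chunk_def by (rule set_encode_less_power) auto

lemma unchunk_chunk: "unchunk b k (chunk b k S) = S \<inter> {k * b..<k * b + b}"
proof -
  have "finite {i. i < b \<and> k * b + i \<in> S}"
    by simp
  then have "unchunk b k (chunk b k S) = (+) (k * b) ` {i. i < b \<and> k * b + i \<in> S}"
    by (simp add: chunk_def unchunk_def)
  also have "\<dots> = S \<inter> {k * b..<k * b + b}"
  proof (intro equalityI subsetI)
    fix x
    assume "x \<in> S \<inter> {k * b..<k * b + b}"
    then show "x \<in> (+) (k * b) ` {i. i < b \<and> k * b + i \<in> S}"
      by (intro image_eqI[of x _ "x - k * b"]) auto
  qed auto
  finally show ?thesis .
qed

text \<open>The local state of a node consists of its own neighbourhood, its phase (the number of
  rounds since its neighbourhood last changed), and for every node u a slot: the number of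
  chunks of u's current neighbourhood received so far, and their union.  Sets are stored via
  \<open>set_encode\<close> so that the state type is countable.  The initial phase num_chunks n means
  that nothing is left to announce.\<close>
type_synonym state = "nat \<times> nat \<times> (nat \<times> nat) list"

definition nbrs :: "state \<Rightarrow> nat set" where
  "nbrs s = set_decode (fst s)"

definition phase :: "state \<Rightarrow> nat" where
  "phase s = fst (snd s)"

definition slot :: "state \<Rightarrow> nat \<Rightarrow> nat \<times> nat set" where
  "slot s u = apsnd set_decode (snd (snd s) ! u)"

definition make_state :: "nat \<Rightarrow> nat set \<Rightarrow> nat \<Rightarrow> (nat \<Rightarrow> nat \<times> nat set) \<Rightarrow> state" where
  "make_state n N p sl = (set_encode N, p, map (apsnd set_encode \<circ> sl) [0..<n])"

lemma nbrs_make_state: "finite N \<Longrightarrow> nbrs (make_state n N p sl) = N"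
  by (simp add: nbrs_def make_state_def)

lemma phase_make_state: "phase (make_state n N p sl) = p"
  by (simp add: phase_def make_state_def)

lemma slot_make_state: "u < n \<Longrightarrow> finite (snd (sl u)) \<Longrightarrow> slot (make_state n N p sl) u = sl u"
  by (cases "sl u") (simp add: slot_def make_state_def)

lemma finite_slot: "finite (snd (slot s u))"
  by (cases "snd (snd s) ! u") (simp add: slot_def)

definition nbrs_after :: "nat \<Rightarrow> state \<Rightarrow> nat set \<Rightarrow> nat set \<Rightarrow> nat set" where
  "nbrs_after n s ins del = (nbrs s \<union> ins - del) \<inter> {..<n}"

definition phase_after :: "state \<Rightarrow> nat set \<Rightarrow> nat set \<Rightarrow> nat" where
  "phase_after s ins del = (if ins = {} \<and> del = {} then Suc (phase s) else 0)"

text \<open>A receiver restarts the slot on chunk 0, which discards the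
  chunks of an outdated neighbourhood.\<close>
definition announce :: "nat \<Rightarrow> nat set \<Rightarrow> nat \<Rightarrow> nat option" where
  "announce n N k = (if k < num_chunks n
     then Some (k * 2 ^ chunk_bits n + chunk (chunk_bits n) k N) else None)"

definition receive :: "nat \<Rightarrow> nat option \<Rightarrow> nat \<times> nat set \<Rightarrow> nat \<times> nat set" where
  "receive b m sl = (case m of None \<Rightarrow> sl
     | Some m \<Rightarrow> let k = m div 2 ^ b in
         (Suc k, (if k = 0 then {} else snd sl) \<union> unchunk b k (m mod 2 ^ b)))"

definition two_hop_dds :: "nat \<Rightarrow> state dds" where
  "two_hop_dds n =
     \<lparr> init = (\<lambda>v. make_state n {} (num_chunks n) (\<lambda>_. (0, {}))),
       send = (\<lambda>v s ins del u. announce n (nbrs_after n s ins del) (phase_after s ins del)),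
       step = (\<lambda>v s ins del rcv. make_state n (nbrs_after n s ins del) (phase_after s ins del)
                 (\<lambda>u. receive (chunk_bits n) (rcv u) (slot s u))),
       consistent = (\<lambda>v s. \<forall>u\<in>nbrs s. num_chunks n \<le> fst (slot s u)),
       answer = (\<lambda>v s x y. (x = v \<and> y \<in> nbrs s) \<or> (y = v \<and> x \<in> nbrs s)
                 \<or> (x \<in> nbrs s \<and> y \<in> snd (slot s x)) \<or> (y \<in> nbrs s \<and> x \<in> snd (slot s y))) \<rparr>"

lemma two_hop_dds_simps:
  "init (two_hop_dds n) v = make_state n {} (num_chunks n) (\<lambda>_. (0, {}))"
  "send (two_hop_dds n) v s ins del u = announce n (nbrs_after n s ins del) (phase_after s ins del)"
  "step (two_hop_dds n) v s ins del rcv = make_state n (nbrs_after n s ins del) (phase_after s ins del)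
     (\<lambda>u. receive (chunk_bits n) (rcv u) (slot s u))"
  "consistent (two_hop_dds n) v s \<longleftrightarrow> (\<forall>u\<in>nbrs s. num_chunks n \<le> fst (slot s u))"
  "answer (two_hop_dds n) v s x y \<longleftrightarrow> (x = v \<and> y \<in> nbrs s) \<or> (y = v \<and> x \<in> nbrs s)
     \<or> (x \<in> nbrs s \<and> y \<in> snd (slot s x)) \<or> (y \<in> nbrs s \<and> x \<in> snd (slot s y))"
  by (simp_all add: two_hop_dds_def)

lemma msg_bounded_two_hop_dds:
  assumes "2 \<le> n"
  shows "msg_bounded n 2 (two_hop_dds n)"
  unfolding msg_bounded_def
proof (intro allI impI)
  fix v s ins del u m
  define k where "k = phase_after s ins del"
  define N where "N = nbrs_after n s ins del"
  assume "send (two_hop_dds n) v s ins del u = Some m"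
  then have "announce n N k = Some m"
    by (simp add: two_hop_dds_simps k_def N_def)
  then have k: "k < num_chunks n" and m: "m = k * 2 ^ chunk_bits n + chunk (chunk_bits n) k N"
    by (simp_all add: announce_def split: if_splits)
  have "m < Suc k * 2 ^ chunk_bits n"
    using m chunk_less[of "chunk_bits n" k N] by simp
  also have "\<dots> \<le> num_chunks n * 2 ^ chunk_bits n"
    using k by (intro mult_le_mono1) simp
  also have "\<dots> \<le> (n + 1) * (n + 1)"
  proof (rule mult_le_mono)
    show "num_chunks n \<le> n + 1"
      by (simp add: num_chunks_def div_le_dividend)
    have "2 ^ chunk_bits n \<le> n"
      using assms unfolding chunk_bits_def by (intro floor_log_exp2_le) simp
    then show "2 ^ chunk_bits n \<le> n + 1"
      by simp
  qed
  finally show "m < (n + 1) ^ 2"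
    by (simp add: power2_eq_square)
qed

definition prefix_slot :: "nat \<Rightarrow> nat \<Rightarrow> nat set \<Rightarrow> nat \<times> nat set" where
  "prefix_slot b c N = (c, N \<inter> {..<c * b})"

lemma receive_announce:
  "receive b (Some (k * 2 ^ b + chunk b k S)) sl =
     (Suc k, (if k = 0 then {} else snd sl) \<union> S \<inter> {k * b..<k * b + b})"
proof -
  have "chunk b k S < 2 ^ b"
    by (rule chunk_less)
  then have "(k * 2 ^ b + chunk b k S) div 2 ^ b = k"
    and "(k * 2 ^ b + chunk b k S) mod 2 ^ b = chunk b k S"
    by simp_all
  then show ?thesis
    by (simp add: receive_def unchunk_chunk)
qed

lemma receive_first_announce:
  "receive (chunk_bits n) (announce n N 0) sl = prefix_slot (chunk_bits n) 1 N"
proof -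
  have first_chunk: "announce n N 0 = Some (0 * 2 ^ chunk_bits n + chunk (chunk_bits n) 0 N)"
    by (simp add: announce_def num_chunks_def)
  show ?thesis
    unfolding first_chunk receive_announce by (auto simp: prefix_slot_def)
qed

lemma receive_next_announce:
  fixes n :: nat
  defines "T \<equiv> num_chunks n" and "b \<equiv> chunk_bits n"
  shows "receive b (announce n N (Suc k)) (prefix_slot b (min (Suc k) T) N) =
     prefix_slot b (min (Suc (Suc k)) T) N"
proof (cases "Suc k < T")
  case True
  then have next_chunk: "announce n N (Suc k) = Some (Suc k * 2 ^ b + chunk b (Suc k) N)"
    by (simp add: announce_def T_def b_def)
  have "N \<inter> {..<Suc k * b} \<union> N \<inter> {Suc k * b..<Suc k * b + b} = N \<inter> {..<Suc (Suc k) * b}"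
    by auto
  then show ?thesis
    using True unfolding next_chunk receive_announce prefix_slot_def by simp
next
  case False
  then have "announce n N (Suc k) = None"
    by (simp add: announce_def T_def)
  then show ?thesis
    using False by (simp add: receive_def min_absorb2)
qed

lemma finite_receive: "finite (snd sl) \<Longrightarrow> finite (snd (receive b m sl))"
  by (auto simp: receive_def unchunk_def Let_def split: option.split)

lemma nbrs_after_nbhd:
  assumes "valid_seq n E" "nbrs s = nbhd E j v"
  shows "nbrs_after n s (ins_nbrs E (Suc j) v) (del_nbrs E (Suc j) v) = nbhd E (Suc j) v"
  using assms nbhd_subset[OF assms(1), of "Suc j" v]
  by (auto simp: nbrs_after_def nbhd_def ins_nbrs_def del_nbrs_def)

lemma phase_after_nbhd:
  "phase_after s (ins_nbrs E (Suc j) v) (del_nbrs E (Suc j) v) =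
     (if nbhd E (Suc j) v = nbhd E j v then Suc (phase s) else 0)"
  by (auto simp: phase_after_def nbhd_def ins_nbrs_def del_nbrs_def)

abbreviation state_at :: "nat \<Rightarrow> (nat \<Rightarrow> nat set set) \<Rightarrow> nat \<Rightarrow> nat \<Rightarrow> state" where
  "state_at n E j v \<equiv> run (two_hop_dds n) E j v"

lemma nbrs_state_at: "valid_seq n E \<Longrightarrow> nbrs (state_at n E j v) = nbhd E j v"
proof (induction j arbitrary: v)
  case 0
  then show ?case
    by (simp add: two_hop_dds_simps nbrs_make_state nbhd_def valid_seq_def)
next
  case (Suc j)
  have "finite (nbhd E (Suc j) v)"
    using nbhd_subset[OF Suc.prems] finite_subset by blast
  then show ?case
    using nbrs_after_nbhd[OF Suc.prems Suc.IH[OF Suc.prems]]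
    by (simp add: two_hop_dds_simps nbrs_make_state)
qed

lemma phase_state_at_Suc:
  "phase (state_at n E (Suc j) v) =
     (if nbhd E (Suc j) v = nbhd E j v then Suc (phase (state_at n E j v)) else 0)"
  by (simp add: two_hop_dds_simps phase_make_state phase_after_nbhd)

lemma phase_state_at_recent_change:
  assumes "phase (state_at n E j u) < num_chunks n"
  shows "phase (state_at n E j u) < j \<and>
    nbhd E (j - phase (state_at n E j u)) u \<noteq> nbhd E (j - phase (state_at n E j u) - 1) u"
  using assms
proof (induction j)
  case 0
  then show ?case
    by (simp add: two_hop_dds_simps phase_make_state)
next
  case (Suc j)
  then show ?case
    by (cases "nbhd E (Suc j) u = nbhd E j u") (simp_all add: phase_state_at_Suc del: run.simps)
qed

lemma slot_state_at_Suc: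
  assumes "valid_seq n E" "{u, v} \<in> E (Suc j)"
  shows "slot (state_at n E (Suc j) v) u =
    receive (chunk_bits n) (announce n (nbhd E (Suc j) u) (phase (state_at n E (Suc j) u)))
      (slot (state_at n E j v) u)"
  using assms valid_seq_edge[OF assms]
  by (simp add: two_hop_dds_simps slot_make_state finite_receive finite_slot
      nbrs_after_nbhd nbrs_state_at phase_make_state)

text \<open>While the edge {u,v} is present, the slot of v for u holds exactly the chunks that u has
  announced since its neighbourhood last changed.\<close>
lemma slot_state_at:
  assumes "valid_seq n E" "{u, v} \<in> E j"
  shows "slot (state_at n E j v) u =
    prefix_slot (chunk_bits n) (min (Suc (phase (state_at n E j u))) (num_chunks n)) (nbhd E j u)"
  using assms(2)
proof (induction j)
  case 0
  then show ?case
    using assms(1) by (simp add: valid_seq_def)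
next
  case (Suc j)
  show ?case
  proof (cases "nbhd E (Suc j) u = nbhd E j u")
    case True
    have "v \<in> nbhd E (Suc j) u"
      using Suc.prems by (simp add: nbhd_def)
    then have "v \<in> nbhd E j u"
      using True by simp
    then have "{u, v} \<in> E j"
      by (simp add: nbhd_def)
    then show ?thesis
      using True Suc.IH slot_state_at_Suc[OF assms(1) Suc.prems]
      by (simp add: phase_state_at_Suc receive_next_announce del: run.simps)
  next
    case False
    then show ?thesis
      using slot_state_at_Suc[OF assms(1) Suc.prems]
      by (simp add: phase_state_at_Suc receive_first_announce num_chunks_def del: run.simps)
  qed
qed

lemma correct_2hop_two_hop_dds:
  assumes "2 \<le> n"
  shows "correct_2hop n (two_hop_dds n)"
  unfolding correct_2hop_def
proof (intro allI impI)
  fix E j v x y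
  assume valid: "valid_seq n E" and "consistent (two_hop_dds n) v (state_at n E j v)"
  then have complete: "num_chunks n \<le> fst (slot (state_at n E j v) w)" if "w \<in> nbhd E j v" for w
    using that by (simp add: two_hop_dds_simps nbrs_state_at)
  have known: "snd (slot (state_at n E j v) w) = nbhd E j w" if "w \<in> nbhd E j v" for w
  proof -
    have "{w, v} \<in> E j"
      using that by (simp add: nbhd_def insert_commute)
    then obtain c where slot: "slot (state_at n E j v) w = prefix_slot (chunk_bits n) c (nbhd E j w)"
      using slot_state_at[OF valid] by blast
    have "n < num_chunks n * chunk_bits n"
      using assms by (rule less_num_chunks_mult_chunk_bits)
    also have "\<dots> \<le> c * chunk_bits n"
      using complete[OF that] by (simp add: slot prefix_slot_def)
    finally show ?thesis
      using nbhd_subset[OF valid, of j w] by (auto simp: slot prefix_slot_def)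
  qed
  show "answer (two_hop_dds n) v (state_at n E j v) x y \<longleftrightarrow> {x, y} \<in> two_hop E j v"
    unfolding two_hop_iff using known by (auto simp: two_hop_dds_simps nbrs_state_at[OF valid])
qed

lemma amortized_le_two_hop_dds: "amortized_le n (two_hop_dds n) (real (num_chunks n))"
proof (rule amortized_le_if_recent_change)
  fix E j v
  assume valid: "valid_seq n E" and "\<not> consistent (two_hop_dds n) v (state_at n E j v)"
  then obtain w where "w \<in> nbhd E j v" and "fst (slot (state_at n E j v) w) < num_chunks n"
    by (auto simp: two_hop_dds_simps nbrs_state_at)
  moreover have "{w, v} \<in> E j"
    using \<open>w \<in> nbhd E j v\<close> by (simp add: nbhd_def insert_commute)
  ultimately have "Suc (phase (state_at n E j w)) < num_chunks n"
    using slot_state_at[OF valid] by (simp add: prefix_slot_def)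
  moreover define p where "p = phase (state_at n E j w)"
  ultimately have "Suc p < num_chunks n" "p < j" and change: "nbhd E (j - p) w \<noteq> nbhd E (j - p - 1) w"
    using phase_state_at_recent_change[of n E j w] by simp_all
  have "E (j - p) \<noteq> E (j - p - 1)"
    by (rule contrapos_nn[OF change]) (simp add: nbhd_def)
  then show "\<exists>s\<in>{1..j}. E s \<noteq> E (s - 1) \<and> j < s + num_chunks n"
    using \<open>p < j\<close> \<open>Suc p < num_chunks n\<close> by (intro bexI[of _ "j - p"]) auto
qed

theorem lemma10:
  shows "\<exists>(K::nat) (C::real). \<forall>n::nat. n \<ge> 2 \<longrightarrow>
           (\<exists>A :: nat dds. msg_bounded n K A \<and> correct_2hop n A \<and>
              amortized_le n A (C * real n / log 2 (real n)))"
proof (intro exI[of _ "2::nat"] exI[of _ "3::real"] allI impI)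
  fix n :: nat
  assume n: "n \<ge> 2"
  have "amortized_le n (two_hop_dds n) (3 * real n / log 2 (real n))"
    using amortized_le_two_hop_dds num_chunks_le[OF n] by (rule amortized_le_mono)
  then show "\<exists>A :: nat dds. msg_bounded n 2 A \<and> correct_2hop n A \<and>
              amortized_le n A (3 * real n / log 2 (real n))"
    using msg_bounded_two_hop_dds[OF n] correct_2hop_two_hop_dds[OF n]
    by (intro exI[of _ "nat_dds (two_hop_dds n)"])
      (simp add: msg_bounded_nat_dds correct_2hop_nat_dds amortized_le_nat_dds)
qed

end
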